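(* Let $K:=F'_x+p\,F'_y$. For every polynomial $r(x,y,p)=\sum_{j} r_j(x,y)p^j$ in $p$ with coefficients holomorphic on $U$, the following equality of holomorphic $2$-forms holds on the surface $S$ (i.e. after restriction to $S$): $$d\Bigl(\frac{r(x,y,p)}{F'_p(x,y,p)}(dy-p\,dx)\Bigr)=\Bigl((r'_x+p\,r'_y)-\Bigl(\frac{K}{F'_p}\Bigr)'_p\, r-\frac{K}{F'_p}\,r'_p\Bigr)\frac{dx\wedge dy}{F'_p}.$$
   Context: Let $d\ge 3$, let $U\subset\mathbb{C}^2$ be open with coordinates $(x,y)$, and let $F(x,y,p)=\sum_{i=0}^d a_i(x,y)p^{d-i}$ with $a_i$ holomorphic on $U$ and $a_0\equiv 1$, such that for every $(x,y)\in U$ the $d$ roots in $p$ of $F(x,y,p)$ are pairwise distinct (so $F$ and $F'_p$ have no common zero). Let $S\subset U\times\mathbb{C}$ be the surface $\{F(x,y,p)=0\}$ (on which $F'_p\neq 0$). Subscripts $'_x,'_y,'_p$ denote partial derivatives with respect to $x,y,p$. *)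

theory Defs
  imports "HOL-Analysis.Analysis"
begin

text \<open>Holomorphy of a function of two complex variables on an open set of C^2:
  complex (Frechet) differentiability, i.e. the real derivative is C-linear.\<close>
definition holo2 :: "(complex \<times> complex \<Rightarrow> complex) \<Rightarrow> (complex \<times> complex) set \<Rightarrow> bool" where
  "holo2 f U \<longleftrightarrow> (\<forall>z\<in>U. \<exists>a b. (f has_derivative (\<lambda>(h, k). a * h + b * k)) (at z))"

definition pdx :: "(complex \<Rightarrow> complex \<Rightarrow> complex \<Rightarrow> complex) \<Rightarrow> complex \<Rightarrow> complex \<Rightarrow> complex \<Rightarrow> complex" where
  "pdx f x y p = deriv (\<lambda>t. f t y p) x"
definition pdy :: "(complex \<Rightarrow> complex \<Rightarrow> complex \<Rightarrow> complex) \<Rightarrow> complex \<Rightarrow> complex \<Rightarrow> complex \<Rightarrow> complex" where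
  "pdy f x y p = deriv (\<lambda>t. f x t p) y"
definition pdp :: "(complex \<Rightarrow> complex \<Rightarrow> complex \<Rightarrow> complex) \<Rightarrow> complex \<Rightarrow> complex \<Rightarrow> complex \<Rightarrow> complex" where
  "pdp f x y p = deriv (\<lambda>t. f x y t) p"

definition Fpoly :: "(nat \<Rightarrow> complex \<times> complex \<Rightarrow> complex) \<Rightarrow> nat \<Rightarrow> complex \<Rightarrow> complex \<Rightarrow> complex \<Rightarrow> complex" where
  "Fpoly a d x y p = (\<Sum>i=0..d. a i (x, y) * p ^ (d - i))"

definition rpoly :: "(nat \<Rightarrow> complex \<times> complex \<Rightarrow> complex) \<Rightarrow> nat \<Rightarrow> complex \<Rightarrow> complex \<Rightarrow> complex \<Rightarrow> complex" where
  "rpoly r m x y p = (\<Sum>j=0..m. r j (x, y) * p ^ j)"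

end

theory Submission
  imports Defs "HOL-Computational_Algebra.Polynomial"
begin

text \<open>On the graph \<open>p = \<phi>(x, y)\<close> of a root, \<open>d(G (dy - p dx)) = (\<partial>\<^sub>x G + \<partial>\<^sub>y (\<phi> G)) dx \<and> dy\<close>
  with \<open>G = r / F'\<^sub>p\<close> restricted to the graph. Implicit differentiation of \<open>F(x, y, \<phi>) = 0\<close> gives
  \<open>\<phi>\<^sub>x = - F'\<^sub>x / F'\<^sub>p\<close> and \<open>\<phi>\<^sub>y = - F'\<^sub>y / F'\<^sub>p\<close>, where \<open>F'\<^sub>p \<noteq> 0\<close> because a polynomial of
  degree \<open>d\<close> with \<open>d\<close> distinct roots has only simple roots. Differentiating \<open>G\<close> along the
  graph by the chain rule and substituting \<open>\<phi>\<^sub>x, \<phi>\<^sub>y\<close> leaves a rational identity in the partial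
  derivatives of \<open>F\<close> and \<open>r\<close> at \<open>p = \<phi>\<close>; the \<open>p\<close>-derivative of \<open>K / F'\<^sub>p\<close> enters it through
  \<open>\<partial>\<^sub>p \<partial>\<^sub>x F = \<partial>\<^sub>x \<partial>\<^sub>p F\<close>, which is immediate for polynomials in \<open>p\<close> with holomorphic
  coefficients.\<close>

lemma card_roots_eq_degree_imp_pderiv_nonzero:
  fixes P :: "'a::idom poly"
  assumes "P \<noteq> 0" and "card {s. poly P s = 0} = degree P" and "poly P s0 = 0"
  shows "poly (pderiv P) s0 \<noteq> 0"
proof
  assume "poly (pderiv P) s0 = 0"
  obtain q where P: "P = [:- s0, 1:] * q"
    using assms(3) by (metis dvdE poly_eq_0_iff_dvd)
  have "poly (pderiv P) s0 = poly q s0"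
    unfolding P pderiv_mult by (simp add: pderiv_pCons)
  then have "poly q s0 = 0"
    using \<open>poly (pderiv P) s0 = 0\<close> by simp
  have "q \<noteq> 0" using assms(1) P by auto
  have "{s. poly P s = 0} = {s. poly q s = 0}"
    using \<open>poly q s0 = 0\<close> by (auto simp: P)
  then have "card {s. poly P s = 0} \<le> degree q"
    using card_poly_roots_bound[OF \<open>q \<noteq> 0\<close>] by simp
  moreover have "degree P = Suc (degree q)"
    using degree_mult_eq[of "[:- s0, 1:]" q] \<open>q \<noteq> 0\<close> by (simp add: P del: mult_pCons_left)
  ultimately show False using assms(2) by simp
qed

lemma holo2_has_field_derivative_fst:
  assumes "holo2 f U" and "(x, y) \<in> U"
  shows "((\<lambda>t. f (t, y)) has_field_derivative deriv (\<lambda>t. f (t, y)) x) (at x)"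
proof -
  obtain A B where "(f has_derivative (\<lambda>(h, k). A * h + B * k)) (at (x, y))"
    using assms unfolding holo2_def by blast
  moreover have "((\<lambda>t. (t, y)) has_derivative (\<lambda>h. (h, 0))) (at x)"
    by (auto intro!: derivative_eq_intros)
  ultimately have "((\<lambda>t. f (t, y)) has_derivative (\<lambda>h. A * h)) (at x)"
    using has_derivative_compose by fastforce
  then show ?thesis
    by (metis DERIV_imp_deriv has_field_derivative_def)
qed

lemma holo2_has_field_derivative_snd:
  assumes "holo2 f U" and "(x, y) \<in> U"
  shows "((\<lambda>t. f (x, t)) has_field_derivative deriv (\<lambda>t. f (x, t)) y) (at y)"
proof -
  obtain A B where "(f has_derivative (\<lambda>(h, k). A * h + B * k)) (at (x, y))"
    using assms unfolding holo2_def by blast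
  moreover have "((\<lambda>t. (x, t)) has_derivative (\<lambda>k. (0, k))) (at y)"
    by (auto intro!: derivative_eq_intros)
  ultimately have "((\<lambda>t. f (x, t)) has_derivative (\<lambda>k. B * k)) (at y)"
    using has_derivative_compose by fastforce
  then show ?thesis
    by (metis DERIV_imp_deriv has_field_derivative_def)
qed

lemma holo2_cmult:
  assumes "holo2 f U"
  shows "holo2 (\<lambda>z. c * f z) U"
  unfolding holo2_def
proof
  fix z assume "z \<in> U"
  then obtain A B where "(f has_derivative (\<lambda>(h, k). A * h + B * k)) (at z)"
    using assms unfolding holo2_def by blast
  then have "((\<lambda>z. c * f z) has_derivative (\<lambda>v. c * (case v of (h, k) \<Rightarrow> A * h + B * k))) (at z)"
    by (rule has_derivative_mult_right)
  moreover have "(\<lambda>v. c * (case v of (h, k) \<Rightarrow> A * h + B * k)) = (\<lambda>(h, k). (c * A) * h + (c * B) * k)"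
    by (auto simp: algebra_simps)
  ultimately show "\<exists>A B. ((\<lambda>z. c * f z) has_derivative (\<lambda>(h, k). A * h + B * k)) (at z)"
    by metis
qed

lemma has_field_derivative_sum_coeff_power:
  fixes c :: "nat \<Rightarrow> 'a::real_normed_field \<Rightarrow> 'a"
  assumes "\<And>k. k < n \<Longrightarrow> (c k has_field_derivative c' k) (at x)"
    and "(\<psi> has_field_derivative \<psi>') (at x)"
  shows "((\<lambda>t. \<Sum>k<n. c k t * \<psi> t ^ k) has_field_derivative
           (\<Sum>k<n. c' k * \<psi> x ^ k) + (\<Sum>k<n. of_nat k * c k x * \<psi> x ^ (k - 1)) * \<psi>') (at x)"
proof -
  have "((\<lambda>t. \<Sum>k<n. c k t * \<psi> t ^ k) has_field_derivative
      (\<Sum>k<n. c' k * \<psi> x ^ k + c k x * (of_nat k * \<psi> x ^ (k - 1) * \<psi>'))) (at x)"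
    by (rule DERIV_sum, rule DERIV_cong[OF DERIV_mult[OF assms(1) DERIV_power[OF assms(2)]]])
      (simp_all add: mult_ac)
  then show ?thesis
    by (simp add: sum.distrib sum_distrib_left sum_distrib_right mult_ac)
qed

lemma sum_of_nat_mult_power_pred_shift:
  "(\<Sum>k<n. of_nat k * b k * p ^ (k - 1)) = (\<Sum>k<n - 1. of_nat (Suc k) * b (Suc k) * (p :: 'a::comm_semiring_1) ^ k)"
  by (cases n) (auto simp: sum.lessThan_Suc_shift simp del: sum.lessThan_Suc)

lemma has_field_derivative_sum_power:
  fixes b :: "nat \<Rightarrow> 'a::real_normed_field"
  shows "((\<lambda>q. \<Sum>k<n. b k * q ^ k) has_field_derivative
           (\<Sum>k<n - 1. of_nat (Suc k) * b (Suc k) * p ^ k)) (at p)"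
proof -
  have "((\<lambda>q. \<Sum>k<n. b k * q ^ k) has_field_derivative
      (\<Sum>k<n. of_nat k * b k * p ^ (k - 1))) (at p)"
    using has_field_derivative_sum_coeff_power[of n "\<lambda>k _. b k" "\<lambda>_. 0" p "\<lambda>q. q" 1] by simp
  then show ?thesis by (simp only: sum_of_nat_mult_power_pred_shift)
qed

lemma has_field_derivative_zero_if_vanishing_on_open:
  assumes "(h has_field_derivative D) (at x)" and "open S" and "x \<in> S"
    and "\<And>t. t \<in> S \<Longrightarrow> h t = 0"
  shows "D = 0"
proof -
  have "(h has_field_derivative 0) (at x)"
    using has_field_derivative_transform_within_open[of "\<lambda>_. 0" 0 x S h] assms(2-4) by simp
  with assms(1) show ?thesis by (rule DERIV_unique)
qed

definition holo_poly_in_p ::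
    "(complex \<Rightarrow> complex \<Rightarrow> complex \<Rightarrow> complex) \<Rightarrow> (complex \<times> complex) set \<Rightarrow> bool" where
  "holo_poly_in_p f U \<longleftrightarrow>
     (\<exists>c n. (\<forall>k<n. holo2 (c k) U) \<and> (\<forall>x y p. f x y p = (\<Sum>k<n. c k (x, y) * p ^ k)))"

lemma pdp_sum_coeff_power:
  assumes "\<And>x y p. f x y p = (\<Sum>k<n. c k (x, y) * p ^ k)"
  shows "pdp f x y p = (\<Sum>k<n - 1. of_nat (Suc k) * c (Suc k) (x, y) * p ^ k)"
  unfolding pdp_def assms by (rule DERIV_imp_deriv has_field_derivative_sum_power)+

lemma pdx_sum_coeff_power:
  assumes "\<And>x y p. f x y p = (\<Sum>k<n. c k (x, y) * p ^ k)"
    and "\<forall>k<n. ((\<lambda>t. c k (t, y)) has_field_derivative c' k) (at x)"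
  shows "pdx f x y p = (\<Sum>k<n. c' k * p ^ k)"
proof -
  have "((\<lambda>t. \<Sum>k<n. c k (t, y) * p ^ k) has_field_derivative (\<Sum>k<n. c' k * p ^ k)) (at x)"
    using has_field_derivative_sum_coeff_power[of n "\<lambda>k t. c k (t, y)" c' x "\<lambda>_. p" 0] assms(2)
    by simp
  then show ?thesis unfolding pdx_def assms(1) by (rule DERIV_imp_deriv)
qed

lemma pdy_sum_coeff_power:
  assumes "\<And>x y p. f x y p = (\<Sum>k<n. c k (x, y) * p ^ k)"
    and "\<forall>k<n. ((\<lambda>t. c k (x, t)) has_field_derivative c' k) (at y)"
  shows "pdy f x y p = (\<Sum>k<n. c' k * p ^ k)"
proof -
  have "((\<lambda>t. \<Sum>k<n. c k (x, t) * p ^ k) has_field_derivative (\<Sum>k<n. c' k * p ^ k)) (at y)"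
    using has_field_derivative_sum_coeff_power[of n "\<lambda>k t. c k (x, t)" c' y "\<lambda>_. p" 0] assms(2)
    by simp
  then show ?thesis unfolding pdy_def assms(1) by (rule DERIV_imp_deriv)
qed

lemma holo_poly_in_p_pdp:
  assumes "holo_poly_in_p f U"
  shows "holo_poly_in_p (pdp f) U"
proof -
  obtain c n where hc: "\<forall>k<n. holo2 (c k) U" and f: "\<And>x y p. f x y p = (\<Sum>k<n. c k (x, y) * p ^ k)"
    using assms unfolding holo_poly_in_p_def by blast
  have "\<forall>k<n - 1. holo2 (\<lambda>z. of_nat (Suc k) * c (Suc k) z) U"
    using hc by (simp add: holo2_cmult)
  then show ?thesis
    unfolding holo_poly_in_p_def pdp_sum_coeff_power[of f c n, OF f]
    by (intro exI[of _ "\<lambda>k z. of_nat (Suc k) * c (Suc k) z"] exI[of _ "n - 1"]) simp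
qed

lemma holo_poly_in_p_has_field_derivative_p:
  assumes "holo_poly_in_p f U"
  shows "((\<lambda>p. f x y p) has_field_derivative pdp f x y p) (at p)"
proof -
  obtain c n where f: "\<And>x y p. f x y p = (\<Sum>k<n. c k (x, y) * p ^ k)"
    using assms unfolding holo_poly_in_p_def by blast
  show ?thesis
    unfolding f pdp_sum_coeff_power[of f c n, OF f] by (rule has_field_derivative_sum_power)
qed

lemma holo_poly_in_p_chain_fst:
  assumes "holo_poly_in_p f U" and "(x, y) \<in> U" and "(\<psi> has_field_derivative \<psi>') (at x)"
  shows "((\<lambda>t. f t y (\<psi> t)) has_field_derivative pdx f x y (\<psi> x) + pdp f x y (\<psi> x) * \<psi>') (at x)"
proof -
  obtain c n where hc: "\<forall>k<n. holo2 (c k) U" and f: "\<And>x y p. f x y p = (\<Sum>k<n. c k (x, y) * p ^ k)"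
    using assms(1) unfolding holo_poly_in_p_def by blast
  define c' where "c' k = deriv (\<lambda>t. c k (t, y)) x" for k
  have dc: "\<forall>k<n. ((\<lambda>t. c k (t, y)) has_field_derivative c' k) (at x)"
    unfolding c'_def using hc assms(2) by (blast intro: holo2_has_field_derivative_fst)
  have "((\<lambda>t. \<Sum>k<n. c k (t, y) * \<psi> t ^ k) has_field_derivative
      (\<Sum>k<n. c' k * \<psi> x ^ k) + (\<Sum>k<n. of_nat k * c k (x, y) * \<psi> x ^ (k - 1)) * \<psi>') (at x)"
    using dc assms(3) by (intro has_field_derivative_sum_coeff_power) auto
  then show ?thesis
    unfolding pdx_sum_coeff_power[of f c n, OF f dc] pdp_sum_coeff_power[of f c n, OF f]
    unfolding f sum_of_nat_mult_power_pred_shift .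
qed

lemma holo_poly_in_p_chain_snd:
  assumes "holo_poly_in_p f U" and "(x, y) \<in> U" and "(\<psi> has_field_derivative \<psi>') (at y)"
  shows "((\<lambda>t. f x t (\<psi> t)) has_field_derivative pdy f x y (\<psi> y) + pdp f x y (\<psi> y) * \<psi>') (at y)"
proof -
  obtain c n where hc: "\<forall>k<n. holo2 (c k) U" and f: "\<And>x y p. f x y p = (\<Sum>k<n. c k (x, y) * p ^ k)"
    using assms(1) unfolding holo_poly_in_p_def by blast
  define c' where "c' k = deriv (\<lambda>t. c k (x, t)) y" for k
  have dc: "\<forall>k<n. ((\<lambda>t. c k (x, t)) has_field_derivative c' k) (at y)"
    unfolding c'_def using hc assms(2) by (blast intro: holo2_has_field_derivative_snd)
  have "((\<lambda>t. \<Sum>k<n. c k (x, t) * \<psi> t ^ k) has_field_derivative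
      (\<Sum>k<n. c' k * \<psi> y ^ k) + (\<Sum>k<n. of_nat k * c k (x, y) * \<psi> y ^ (k - 1)) * \<psi>') (at y)"
    using dc assms(3) by (intro has_field_derivative_sum_coeff_power) auto
  then show ?thesis
    unfolding pdy_sum_coeff_power[of f c n, OF f dc] pdp_sum_coeff_power[of f c n, OF f]
    unfolding f sum_of_nat_mult_power_pred_shift .
qed

lemma holo_poly_in_p_pdx_has_field_derivative_p:
  assumes "holo_poly_in_p f U" and "(x, y) \<in> U"
  shows "((\<lambda>p. pdx f x y p) has_field_derivative pdx (pdp f) x y p) (at p)"
proof -
  obtain c n where hc: "\<forall>k<n. holo2 (c k) U" and f: "\<And>x y p. f x y p = (\<Sum>k<n. c k (x, y) * p ^ k)"
    using assms(1) unfolding holo_poly_in_p_def by blast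
  define c' where "c' k = deriv (\<lambda>t. c k (t, y)) x" for k
  have dc: "\<forall>k<n. ((\<lambda>t. c k (t, y)) has_field_derivative c' k) (at x)"
    unfolding c'_def using hc assms(2) by (blast intro: holo2_has_field_derivative_fst)
  then have "pdx (pdp f) x y p = (\<Sum>k<n - 1. of_nat (Suc k) * c' (Suc k) * p ^ k)"
    by (intro pdx_sum_coeff_power[of _ "\<lambda>k z. of_nat (Suc k) * c (Suc k) z"])
      (auto simp: pdp_sum_coeff_power[of f c n, OF f] intro: DERIV_cmult)
  then show ?thesis
    unfolding pdx_sum_coeff_power[of f c n, OF f dc] by (simp only: has_field_derivative_sum_power)
qed

lemma holo_poly_in_p_pdy_has_field_derivative_p:
  assumes "holo_poly_in_p f U" and "(x, y) \<in> U"
  shows "((\<lambda>p. pdy f x y p) has_field_derivative pdy (pdp f) x y p) (at p)"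
proof -
  obtain c n where hc: "\<forall>k<n. holo2 (c k) U" and f: "\<And>x y p. f x y p = (\<Sum>k<n. c k (x, y) * p ^ k)"
    using assms(1) unfolding holo_poly_in_p_def by blast
  define c' where "c' k = deriv (\<lambda>t. c k (x, t)) y" for k
  have dc: "\<forall>k<n. ((\<lambda>t. c k (x, t)) has_field_derivative c' k) (at y)"
    unfolding c'_def using hc assms(2) by (blast intro: holo2_has_field_derivative_snd)
  then have "pdy (pdp f) x y p = (\<Sum>k<n - 1. of_nat (Suc k) * c' (Suc k) * p ^ k)"
    by (intro pdy_sum_coeff_power[of _ "\<lambda>k z. of_nat (Suc k) * c (Suc k) z"])
      (auto simp: pdp_sum_coeff_power[of f c n, OF f] intro: DERIV_cmult)
  then show ?thesis
    unfolding pdy_sum_coeff_power[of f c n, OF f dc] by (simp only: has_field_derivative_sum_power)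
qed

lemma holo_poly_in_p_implicit_fst:
  assumes "holo_poly_in_p F U" and "open V" and "V \<subseteq> U" and "(x, y) \<in> V"
    and "((\<lambda>t. \<phi> (t, y)) has_field_derivative \<phi>') (at x)"
    and "\<forall>x y. (x, y) \<in> V \<longrightarrow> F x y (\<phi> (x, y)) = 0"
  shows "pdx F x y (\<phi> (x, y)) + pdp F x y (\<phi> (x, y)) * \<phi>' = 0"
proof (rule has_field_derivative_zero_if_vanishing_on_open)
  show "((\<lambda>t. F t y (\<phi> (t, y))) has_field_derivative
      pdx F x y (\<phi> (x, y)) + pdp F x y (\<phi> (x, y)) * \<phi>') (at x)"
    using holo_poly_in_p_chain_fst[OF assms(1) _ assms(5)] assms(3,4) by auto
  show "open ((\<lambda>t. (t, y)) -` V)"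
    by (rule continuous_open_vimage) (auto intro: assms(2))
qed (use assms(4,6) in auto)

lemma holo_poly_in_p_implicit_snd:
  assumes "holo_poly_in_p F U" and "open V" and "V \<subseteq> U" and "(x, y) \<in> V"
    and "((\<lambda>t. \<phi> (x, t)) has_field_derivative \<phi>') (at y)"
    and "\<forall>x y. (x, y) \<in> V \<longrightarrow> F x y (\<phi> (x, y)) = 0"
  shows "pdy F x y (\<phi> (x, y)) + pdp F x y (\<phi> (x, y)) * \<phi>' = 0"
proof (rule has_field_derivative_zero_if_vanishing_on_open)
  show "((\<lambda>t. F x t (\<phi> (x, t))) has_field_derivative
      pdy F x y (\<phi> (x, y)) + pdp F x y (\<phi> (x, y)) * \<phi>') (at y)"
    using holo_poly_in_p_chain_snd[OF assms(1) _ assms(5)] assms(3,4) by auto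
  show "open ((\<lambda>t. (x, t)) -` V)"
    by (rule continuous_open_vimage) (auto intro: assms(2))
qed (use assms(4,6) in auto)

lemma Fpoly_eq_sum: "Fpoly a d x y p = (\<Sum>k<Suc d. a (d - k) (x, y) * p ^ k)"
  unfolding Fpoly_def lessThan_Suc_atMost atLeast0AtMost[symmetric]
  by (subst sum.atLeastAtMost_rev) (simp add: diff_diff_cancel)

lemma rpoly_eq_sum: "rpoly r m x y p = (\<Sum>j<Suc m. r j (x, y) * p ^ j)"
  unfolding rpoly_def lessThan_Suc_atMost atLeast0AtMost ..

lemma holo_poly_in_p_Fpoly:
  assumes "\<forall>i\<le>d. holo2 (a i) U"
  shows "holo_poly_in_p (Fpoly a d) U"
  unfolding holo_poly_in_p_def Fpoly_eq_sum
  using assms by (intro exI[of _ "\<lambda>k. a (d - k)"] exI[of _ "Suc d"]) auto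

lemma holo_poly_in_p_rpoly:
  assumes "\<forall>j\<le>m. holo2 (r j) U"
  shows "holo_poly_in_p (rpoly r m) U"
  unfolding holo_poly_in_p_def rpoly_eq_sum
  using assms by (intro exI[of _ r] exI[of _ "Suc m"]) auto

lemma pdp_Fpoly_nonzero_at_root:
  assumes "a 0 (x, y) = 1" and "card {p. Fpoly a d x y p = 0} = d" and "Fpoly a d x y p0 = 0"
  shows "pdp (Fpoly a d) x y p0 \<noteq> 0"
proof -
  define P where "P = (\<Sum>k<Suc d. monom (a (d - k) (x, y)) k)"
  have poly_P: "poly P p = Fpoly a d x y p" for p
    by (simp add: P_def Fpoly_eq_sum poly_sum poly_monom)
  have coeff_P: "coeff P k = (if k \<le> d then a (d - k) (x, y) else 0)" for k
    by (simp add: P_def coeff_sum coeff_monom)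
  have "degree P = d"
  proof (rule antisym)
    show "degree P \<le> d" by (rule degree_le) (simp add: coeff_P)
    show "d \<le> degree P" by (rule le_degree) (simp add: coeff_P assms(1))
  qed
  moreover have "P \<noteq> 0"
    using coeff_P[of d] assms(1) by auto
  moreover have "pdp (Fpoly a d) x y p0 = poly (pderiv P) p0"
    unfolding pdp_def poly_P[symmetric] by (rule DERIV_imp_deriv[OF poly_DERIV])
  ultimately show ?thesis
    using card_roots_eq_degree_imp_pderiv_nonzero[of P p0] assms(2,3) by (simp add: poly_P)
qed

lemma holo_poly_in_p_quotient_chain_fst:
  assumes "holo_poly_in_p f U" and "holo_poly_in_p g U" and "(x, y) \<in> U"
    and "(\<psi> has_field_derivative \<psi>') (at x)" and "g x y (\<psi> x) \<noteq> 0"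
  shows "((\<lambda>t. f t y (\<psi> t) / g t y (\<psi> t)) has_field_derivative
           ((pdx f x y (\<psi> x) + pdp f x y (\<psi> x) * \<psi>') * g x y (\<psi> x)
            - f x y (\<psi> x) * (pdx g x y (\<psi> x) + pdp g x y (\<psi> x) * \<psi>'))
           / (g x y (\<psi> x) * g x y (\<psi> x))) (at x)"
  using assms by (intro DERIV_divide holo_poly_in_p_chain_fst)

lemma holo_poly_in_p_quotient_chain_snd:
  assumes "holo_poly_in_p f U" and "holo_poly_in_p g U" and "(x, y) \<in> U"
    and "(\<psi> has_field_derivative \<psi>') (at y)" and "g x y (\<psi> y) \<noteq> 0"
  shows "((\<lambda>t. f x t (\<psi> t) / g x t (\<psi> t)) has_field_derivative
           ((pdy f x y (\<psi> y) + pdp f x y (\<psi> y) * \<psi>') * g x y (\<psi> y)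
            - f x y (\<psi> y) * (pdy g x y (\<psi> y) + pdp g x y (\<psi> y) * \<psi>'))
           / (g x y (\<psi> y) * g x y (\<psi> y))) (at y)"
  using assms by (intro DERIV_divide holo_poly_in_p_chain_snd)

lemma pdp_contact_derivative_quotient:
  assumes "holo_poly_in_p F U" and "(x, y) \<in> U" and "pdp F x y p \<noteq> 0"
  shows "pdp (\<lambda>x y p. (pdx F x y p + p * pdy F x y p) / pdp F x y p) x y p
       = ((pdx (pdp F) x y p + pdy F x y p + p * pdy (pdp F) x y p) * pdp F x y p
          - (pdx F x y p + p * pdy F x y p) * pdp (pdp F) x y p) / (pdp F x y p * pdp F x y p)"
proof -
  have "((\<lambda>p. pdx F x y p + p * pdy F x y p) has_field_derivative
      pdx (pdp F) x y p + pdy F x y p + p * pdy (pdp F) x y p) (at p)"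
    using DERIV_add[OF holo_poly_in_p_pdx_has_field_derivative_p[OF assms(1,2)]
        DERIV_mult[OF DERIV_ident holo_poly_in_p_pdy_has_field_derivative_p[OF assms(1,2)]]]
    by (simp add: algebra_simps)
  from DERIV_divide[OF this holo_poly_in_p_has_field_derivative_p[OF holo_poly_in_p_pdp[OF assms(1)]] assms(3)]
  show ?thesis
    unfolding pdp_def[of "\<lambda>x y p. (pdx F x y p + p * pdy F x y p) / pdp F x y p"] by (rule DERIV_imp_deriv)
qed

lemma root_graph_divergence_algebra:
  fixes Fx Fy Fp Fxp Fyp Fpp R Rx Ry Rp p \<phi>x \<phi>y :: "'a::field"
  assumes "Fp \<noteq> 0" and "Fx + Fp * \<phi>x = 0" and "Fy + Fp * \<phi>y = 0"
  shows "((Rx + Rp * \<phi>x) * Fp - R * (Fxp + Fpp * \<phi>x)) / (Fp * Fp)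
         + (((Ry + Rp * \<phi>y) * Fp - R * (Fyp + Fpp * \<phi>y)) / (Fp * Fp) * p + R / Fp * \<phi>y)
       = ((Rx + p * Ry) - ((Fxp + Fy + p * Fyp) * Fp - (Fx + p * Fy) * Fpp) / (Fp * Fp) * R
          - (Fx + p * Fy) / Fp * Rp) / Fp"
proof -
  have "\<phi>x = - Fx / Fp" and "\<phi>y = - Fy / Fp"
    using assms by (simp_all add: field_simps add_eq_0_iff)
  then show ?thesis using assms(1) by simp (simp add: field_simps)
qed

lemma root_graph_divergence:
  assumes hF: "holo_poly_in_p F U" and hR: "holo_poly_in_p R U"
    and "open V" and "V \<subseteq> U" and "holo2 \<phi> V"
    and root: "\<forall>x y. (x, y) \<in> V \<longrightarrow> F x y (\<phi> (x, y)) = 0"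
    and xy: "(x, y) \<in> V" and Fp_nz: "pdp F x y (\<phi> (x, y)) \<noteq> 0"
  shows "let K = (\<lambda>x y p. pdx F x y p + p * pdy F x y p);
             Q = (\<lambda>x y p. K x y p / pdp F x y p);
             G = (\<lambda>x y. R x y (\<phi> (x, y)) / pdp F x y (\<phi> (x, y)));
             p0 = \<phi> (x, y)
         in deriv (\<lambda>t. G t y) x + deriv (\<lambda>t. G x t * \<phi> (x, t)) y
            = ((pdx R x y p0 + p0 * pdy R x y p0) - pdp Q x y p0 * R x y p0
                - Q x y p0 * pdp R x y p0) / pdp F x y p0"
proof -
  have xyU: "(x, y) \<in> U" using xy \<open>V \<subseteq> U\<close> by auto
  have hFp: "holo_poly_in_p (pdp F) U" using hF by (rule holo_poly_in_p_pdp)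
  let ?p0 = "\<phi> (x, y)"
  let ?Fp = "pdp F x y ?p0" and ?Fpp = "pdp (pdp F) x y ?p0"
  let ?Fxp = "pdx (pdp F) x y ?p0" and ?Fyp = "pdy (pdp F) x y ?p0"
  obtain \<phi>x \<phi>y where d\<phi>x: "((\<lambda>t. \<phi> (t, y)) has_field_derivative \<phi>x) (at x)"
    and d\<phi>y: "((\<lambda>t. \<phi> (x, t)) has_field_derivative \<phi>y) (at y)"
    using holo2_has_field_derivative_fst holo2_has_field_derivative_snd \<open>holo2 \<phi> V\<close> xy by blast
  have dGx: "deriv (\<lambda>t. R t y (\<phi> (t, y)) / pdp F t y (\<phi> (t, y))) x
      = ((pdx R x y ?p0 + pdp R x y ?p0 * \<phi>x) * ?Fp - R x y ?p0 * (?Fxp + ?Fpp * \<phi>x)) / (?Fp * ?Fp)"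
    by (rule DERIV_imp_deriv holo_poly_in_p_quotient_chain_fst[OF hR hFp xyU d\<phi>x Fp_nz])+
  have "((\<lambda>t. R x t (\<phi> (x, t)) / pdp F x t (\<phi> (x, t)) * \<phi> (x, t)) has_field_derivative
      ((pdy R x y ?p0 + pdp R x y ?p0 * \<phi>y) * ?Fp - R x y ?p0 * (?Fyp + ?Fpp * \<phi>y)) / (?Fp * ?Fp) * ?p0
      + R x y ?p0 / ?Fp * \<phi>y) (at y)"
    using DERIV_mult[OF holo_poly_in_p_quotient_chain_snd[OF hR hFp xyU d\<phi>y Fp_nz] d\<phi>y]
    by (simp only: mult.commute[of \<phi>y])
  then have dGy: "deriv (\<lambda>t. R x t (\<phi> (x, t)) / pdp F x t (\<phi> (x, t)) * \<phi> (x, t)) y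
      = ((pdy R x y ?p0 + pdp R x y ?p0 * \<phi>y) * ?Fp - R x y ?p0 * (?Fyp + ?Fpp * \<phi>y)) / (?Fp * ?Fp) * ?p0
        + R x y ?p0 / ?Fp * \<phi>y"
    by (rule DERIV_imp_deriv)
  show ?thesis
    unfolding Let_def dGx dGy pdp_contact_derivative_quotient[OF hF xyU Fp_nz]
    using root_graph_divergence_algebra[OF Fp_nz
        holo_poly_in_p_implicit_fst[OF hF \<open>open V\<close> \<open>V \<subseteq> U\<close> xy d\<phi>x root]
        holo_poly_in_p_implicit_snd[OF hF \<open>open V\<close> \<open>V \<subseteq> U\<close> xy d\<phi>y root]]
    by simp
qed

theorem lemma1:
  fixes a :: "nat \<Rightarrow> complex \<times> complex \<Rightarrow> complex" and d :: nat
    and U :: "(complex \<times> complex) set"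
    and r :: "nat \<Rightarrow> complex \<times> complex \<Rightarrow> complex" and m :: nat
    and V :: "(complex \<times> complex) set" and \<phi> :: "complex \<times> complex \<Rightarrow> complex"
  assumes "d \<ge> 3" and "open U"
    and "\<forall>i\<le>d. holo2 (a i) U"
    and "\<forall>z\<in>U. a 0 z = 1"
    and "\<forall>x y. (x, y) \<in> U \<longrightarrow> card {p. Fpoly a d x y p = 0} = d"
    and "\<forall>j\<le>m. holo2 (r j) U"
    and "open V" and "V \<subseteq> U" and "holo2 \<phi> V"
    and "\<forall>x y. (x, y) \<in> V \<longrightarrow> Fpoly a d x y (\<phi> (x, y)) = 0"
  shows "\<forall>x y. (x, y) \<in> V \<longrightarrow>
    (let F = Fpoly a d; R = rpoly r m;
         K = (\<lambda>x y p. pdx F x y p + p * pdy F x y p);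
         Q = (\<lambda>x y p. K x y p / pdp F x y p);
         G = (\<lambda>x y. R x y (\<phi> (x, y)) / pdp F x y (\<phi> (x, y)));
         p0 = \<phi> (x, y)
     in deriv (\<lambda>t. G t y) x + deriv (\<lambda>t. G x t * \<phi> (x, t)) y
        = ((pdx R x y p0 + p0 * pdy R x y p0) - pdp Q x y p0 * R x y p0
            - Q x y p0 * pdp R x y p0) / pdp F x y p0)"
proof -
  have "pdp (Fpoly a d) x y (\<phi> (x, y)) \<noteq> 0" if "(x, y) \<in> V" for x y
    using assms(4,5,8,10) that by (intro pdp_Fpoly_nonzero_at_root) auto
  then show ?thesis
    using root_graph_divergence[OF holo_poly_in_p_Fpoly[OF assms(3)] holo_poly_in_p_rpoly[OF assms(6)]
        assms(7-10)]
    unfolding Let_def by blast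
qed

end
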